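(* For each $n$, the map sending a UEC-representative $\mathcal{U}$ on vertex set $[n]$ to its DAG-reduction $\mathcal{D}^\mathcal{U}$ is injective; hence it is a bijection between the set of UEC-representatives on $[n]$ and the set of their DAG-reductions.
   Context: A UEC-representative on $[n]$ is an undirected graph equal to the unconditional dependence graph $\mathcal{U}^\mathcal{D}$ of some DAG $\mathcal{D}$ on $[n]$ ($\mathcal{U}^\mathcal{D}$ joins distinct $v,w$ iff there is a trek, i.e. a collider-free path without repeated vertices, between them). $\mathtt{init\_CPDAG}(\mathcal{U})$ is obtained from $\mathcal{U}$ by orienting, for every induced path $v-v'-v''$, its edges as $v\to v'\leftarrow v''$, then removing edges that received both orientations, directing edges that received one, and leaving the rest undirected. For $\mathcal{G}=\mathtt{init\_CPDAG}(\mathcal{U})$ and a vertex $v$, the chain component $\mathrm{cc}_\mathcal{G}(v)$ is the set of vertices joined to $v$ by a path of undirected edges (including $v$). The DAG-reduction $\mathcal{D}^\mathcal{U}$ has as vertices the chain components of $\mathcal{G}$ (subsets of $[n]$) and an edge $\mathbf{v}\to\mathbf{w}$ iff some $v\in\mathbf{v}$, $w\in\mathbf{w}$ satisfy $v\to w$ in $\mathcal{G}$. *)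

theory Defs
  imports Main
begin

text \<open>A directed graph is a relation (set of ordered
pairs (v,w) meaning v -> w). An undirected graph is a symmetric irreflexive
relation (both (v,w) and (w,v) present for an edge v - w).\<close>

definition vset :: "nat \<Rightarrow> nat set" where
  "vset n = {1..n}"

definition is_dag :: "nat \<Rightarrow> (nat \<times> nat) set \<Rightarrow> bool" where
  "is_dag n D \<longleftrightarrow> D \<subseteq> vset n \<times> vset n \<and> acyclic D"

definition is_trek :: "(nat \<times> nat) set \<Rightarrow> nat list \<Rightarrow> nat \<Rightarrow> nat \<Rightarrow> bool" where
  "is_trek D p v w \<longleftrightarrow>
     p \<noteq> [] \<and> hd p = v \<and> last p = w \<and> distinct p \<and>
     (\<forall>i. Suc i < length p \<longrightarrow> (p!i, p!Suc i) \<in> D \<or> (p!Suc i, p!i) \<in> D) \<and>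
     (\<forall>i. Suc (Suc i) < length p \<longrightarrow>
        \<not> ((p!i, p!Suc i) \<in> D \<and> (p!Suc (Suc i), p!Suc i) \<in> D))"

definition udg :: "nat \<Rightarrow> (nat \<times> nat) set \<Rightarrow> (nat \<times> nat) set" where
  "udg n D = {(v, w). v \<in> vset n \<and> w \<in> vset n \<and> v \<noteq> w \<and> (\<exists>p. is_trek D p v w)}"

definition UEC_rep :: "nat \<Rightarrow> (nat \<times> nat) set \<Rightarrow> bool" where
  "UEC_rep n U \<longleftrightarrow> (\<exists>D. is_dag n D \<and> U = udg n D)"

text \<open>init_CPDAG(U): every induced path a - b - c marks a -> b and c -> b.\<close>

definition cpdag_marks :: "(nat \<times> nat) set \<Rightarrow> (nat \<times> nat) set" where
  "cpdag_marks U = {(a, b). \<exists>c. (a, b) \<in> U \<and> (c, b) \<in> U \<and> a \<noteq> c \<and> (a, c) \<notin> U}"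

definition cpdag_dir :: "(nat \<times> nat) set \<Rightarrow> (nat \<times> nat) set" where
  "cpdag_dir U = {(a, b). (a, b) \<in> cpdag_marks U \<and> (b, a) \<notin> cpdag_marks U}"

definition cpdag_undir :: "(nat \<times> nat) set \<Rightarrow> (nat \<times> nat) set" where
  "cpdag_undir U = {(a, b). (a, b) \<in> U \<and> (a, b) \<notin> cpdag_marks U \<and> (b, a) \<notin> cpdag_marks U}"

definition chain_comp :: "(nat \<times> nat) set \<Rightarrow> nat \<Rightarrow> nat set" where
  "chain_comp U v = {w. (v, w) \<in> (cpdag_undir U)\<^sup>*}"

definition dag_reduction :: "nat \<Rightarrow> (nat \<times> nat) set \<Rightarrow> nat set set \<times> (nat set \<times> nat set) set" where
  "dag_reduction n U =
     (chain_comp U ` vset n,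
      {(chain_comp U v, chain_comp U w) | v w. (v, w) \<in> cpdag_dir U})"

end

theory Submission
  imports Defs
begin

text \<open>Two vertices are adjacent in \<open>U\<^sup>D\<close> iff they have a common ancestor in \<open>D\<close>: a
trek climbs from one to its source and descends to the other. Taking a parentless common ancestor
\<open>s\<close> of an edge \<open>v - w\<close> shows that the closed neighbourhood \<open>N[s]\<close> lies in both \<open>N[v]\<close> and
\<open>N[w]\<close>. In a symmetric graph, \<open>init_CPDAG\<close> marks the endpoint \<open>b\<close> of an edge \<open>a - b\<close> exactly
when \<open>N[b] \<subseteq> N[a]\<close> fails, so the chain components are the classes of vertices with equal
closed neighbourhoods and directed edges run from smaller to larger ones. Consequently
\<open>v - w\<close> holds iff the components of \<open>v\<close> and \<open>w\<close> have a common parent-or-self in \<open>D\<^sup>U\<close>,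
and \<open>U\<close> can be read off its DAG-reduction.\<close>

definition collider_free_walk :: "(nat \<times> nat) set \<Rightarrow> nat list \<Rightarrow> bool" where
  "collider_free_walk D p \<longleftrightarrow>
     (\<forall>i. Suc i < length p \<longrightarrow> (p!i, p!Suc i) \<in> D \<or> (p!Suc i, p!i) \<in> D) \<and>
     (\<forall>i. Suc (Suc i) < length p \<longrightarrow>
        \<not> ((p!i, p!Suc i) \<in> D \<and> (p!Suc (Suc i), p!Suc i) \<in> D))"

lemma is_trek_iff:
  "is_trek D p v w \<longleftrightarrow> p \<noteq> [] \<and> hd p = v \<and> last p = w \<and> distinct p \<and> collider_free_walk D p"
  unfolding is_trek_def collider_free_walk_def by blast

lemma collider_free_walk_Nil [simp]: "collider_free_walk D []"
  and collider_free_walk_singleton [simp]: "collider_free_walk D [x]"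
  by (simp_all add: collider_free_walk_def)

lemma all_nat_split: "(\<forall>i::nat. P i) \<longleftrightarrow> P 0 \<and> (\<forall>i. P (Suc i))"
  by (metis not0_implies_Suc)

lemma collider_free_walk_Cons_Cons:
  "collider_free_walk D (x # y # p) \<longleftrightarrow>
     ((x, y) \<in> D \<or> (y, x) \<in> D) \<and> (p \<noteq> [] \<longrightarrow> \<not> ((x, y) \<in> D \<and> (hd p, y) \<in> D)) \<and>
     collider_free_walk D (y # p)"
proof -
  let ?q = "y # p"
  have adjacent: "(\<forall>i. Suc i < length (x # ?q) \<longrightarrow>
        ((x # ?q)!i, (x # ?q)!Suc i) \<in> D \<or> ((x # ?q)!Suc i, (x # ?q)!i) \<in> D)
    \<longleftrightarrow> ((x, y) \<in> D \<or> (y, x) \<in> D) \<and>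
        (\<forall>i. Suc i < length ?q \<longrightarrow> (?q!i, ?q!Suc i) \<in> D \<or> (?q!Suc i, ?q!i) \<in> D)"
    by (subst all_nat_split) simp
  have no_collider: "(\<forall>i. Suc (Suc i) < length (x # ?q) \<longrightarrow>
        \<not> (((x # ?q)!i, (x # ?q)!Suc i) \<in> D \<and> ((x # ?q)!Suc (Suc i), (x # ?q)!Suc i) \<in> D))
    \<longleftrightarrow> (p \<noteq> [] \<longrightarrow> \<not> ((x, y) \<in> D \<and> (hd p, y) \<in> D)) \<and>
        (\<forall>i. Suc (Suc i) < length ?q \<longrightarrow>
           \<not> ((?q!i, ?q!Suc i) \<in> D \<and> (?q!Suc (Suc i), ?q!Suc i) \<in> D))"
    by (subst all_nat_split) (cases p, simp_all)
  show ?thesis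
    unfolding collider_free_walk_def adjacent no_collider by blast
qed

lemma collider_free_walk_rev:
  assumes "collider_free_walk D p"
  shows "collider_free_walk D (rev p)"
proof -
  have rev_idx: "rev p ! i = p ! (length p - Suc i)" "rev p ! Suc i = p ! (length p - Suc (Suc i))"
    if "Suc i < length p" for i
    using that by (simp_all add: rev_nth)
  show ?thesis
    unfolding collider_free_walk_def
  proof (intro conjI allI impI notI)
    fix i assume i: "Suc i < length (rev p)"
    define j where "j = length p - Suc (Suc i)"
    have "Suc j < length p" "length p - Suc i = Suc j" using i by (auto simp: j_def)
    then show "(rev p ! i, rev p ! Suc i) \<in> D \<or> (rev p ! Suc i, rev p ! i) \<in> D"
      using assms i rev_idx[of i] unfolding collider_free_walk_def j_def by auto
  next
    fix i assume i: "Suc (Suc i) < length (rev p)"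
      and c: "(rev p ! i, rev p ! Suc i) \<in> D \<and> (rev p ! Suc (Suc i), rev p ! Suc i) \<in> D"
    define j where "j = length p - Suc (Suc (Suc i))"
    have "Suc (Suc j) < length p" "length p - Suc i = Suc (Suc j)" "length p - Suc (Suc i) = Suc j"
      "length p - Suc (Suc (Suc i)) = j"
      using i by (auto simp: j_def)
    then show False
      using assms c i rev_idx[of i] rev_idx[of "Suc i"] unfolding collider_free_walk_def by auto
  qed
qed

lemma collider_free_walk_Cons: "collider_free_walk D (x # p) \<Longrightarrow> collider_free_walk D p"
  by (cases p) (simp_all add: collider_free_walk_Cons_Cons)

lemma collider_free_walk_drop: "collider_free_walk D p \<Longrightarrow> collider_free_walk D (drop j p)"
proof (induction j arbitrary: p)
  case (Suc j)
  then show ?case by (cases p) (auto dest: collider_free_walk_Cons)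
qed simp

lemma is_trek_rev: "is_trek D p v w \<Longrightarrow> is_trek D (rev p) w v"
  by (simp add: is_trek_iff collider_free_walk_rev hd_rev last_rev)

lemma acyclic_asym: "acyclic D \<Longrightarrow> (a, b) \<in> D \<Longrightarrow> (b, a) \<notin> D"
  unfolding acyclic_def by (meson r_into_trancl trancl_into_trancl)

text \<open>Prepending a child never creates a collider, since the new first edge points away from
the old endpoint; if the child already lies on the trek, its suffix from the child is a trek.\<close>

lemma trek_extend_by_child:
  assumes "acyclic D" "is_trek D p y w" "(y, x) \<in> D"
  shows "\<exists>p'. is_trek D p' x w"
proof (cases "x \<in> set p")
  case True
  then obtain j where j: "j < length p" "p ! j = x" by (auto simp: in_set_conv_nth)
  have "is_trek D (drop j p) x w"
    using assms(2) j by (auto simp: is_trek_iff hd_drop_conv_nth collider_free_walk_drop)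
  then show ?thesis ..
next
  case False
  obtain q where p: "p = y # q"
    using assms(2) by (cases p) (auto simp: is_trek_iff)
  have "(x, y) \<notin> D" using acyclic_asym[OF assms(1,3)] .
  then have "is_trek D (x # p) x w"
    using assms(2,3) False by (auto simp: is_trek_iff p collider_free_walk_Cons_Cons)
  then show ?thesis ..
qed

lemma trek_extend_by_descendant:
  assumes "acyclic D" "(y, x) \<in> D\<^sup>*" "is_trek D p y w"
  shows "\<exists>p'. is_trek D p' x w"
  using assms(2)
proof (induction rule: rtrancl_induct)
  case base
  then show ?case using assms(3) by blast
next
  case (step x' x)
  then show ?case using trek_extend_by_child[OF assms(1)] by blast
qed

lemma common_ancestor_imp_trek:
  assumes "acyclic D" "(t, v) \<in> D\<^sup>*" "(t, w) \<in> D\<^sup>*"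
  shows "\<exists>p. is_trek D p v w"
proof -
  have "is_trek D [t] t t" by (simp add: is_trek_iff)
  then obtain p where "is_trek D p v t"
    using trek_extend_by_descendant[OF assms(1,2)] by blast
  then obtain q where "is_trek D q w v"
    using trek_extend_by_descendant[OF assms(1,3)] is_trek_rev by blast
  then show ?thesis using is_trek_rev by blast
qed

lemma collider_free_walk_forward:
  "collider_free_walk D (x # y # p) \<Longrightarrow> (y, x) \<notin> D \<Longrightarrow> (x, last (y # p)) \<in> D\<^sup>*"
proof (induction p arbitrary: x y)
  case Nil
  then show ?case by (simp add: collider_free_walk_Cons_Cons)
next
  case (Cons z p)
  then have "(x, y) \<in> D" "(z, y) \<notin> D" "collider_free_walk D (y # z # p)"
    by (auto simp: collider_free_walk_Cons_Cons)
  with Cons.IH have "(y, last (z # p)) \<in> D\<^sup>*" by blast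
  with \<open>(x, y) \<in> D\<close> show ?case by (simp add: converse_rtrancl_into_rtrancl)
qed

lemma collider_free_walk_common_ancestor:
  "collider_free_walk D (x # p) \<Longrightarrow> \<exists>t. (t, x) \<in> D\<^sup>* \<and> (t, last (x # p)) \<in> D\<^sup>*"
proof (induction p arbitrary: x)
  case (Cons y p)
  show ?case
  proof (cases "(y, x) \<in> D")
    case True
    obtain t where "(t, y) \<in> D\<^sup>*" "(t, last (y # p)) \<in> D\<^sup>*"
      using Cons collider_free_walk_Cons by blast
    with True show ?thesis by (auto intro: rtrancl_into_rtrancl)
  next
    case False
    then show ?thesis using collider_free_walk_forward[OF Cons.prems] by auto
  qed
qed auto

lemma trek_imp_common_ancestor: "is_trek D p v w \<Longrightarrow> \<exists>t. (t, v) \<in> D\<^sup>* \<and> (t, w) \<in> D\<^sup>*"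
  unfolding is_trek_iff by (metis list.collapse collider_free_walk_common_ancestor)

lemma trek_iff_common_ancestor:
  "acyclic D \<Longrightarrow> (\<exists>p. is_trek D p v w) \<longleftrightarrow> (\<exists>t. (t, v) \<in> D\<^sup>* \<and> (t, w) \<in> D\<^sup>*)"
  using trek_imp_common_ancestor common_ancestor_imp_trek by metis

lemma udg_iff_common_ancestor:
  "is_dag n D \<Longrightarrow>
     (a, b) \<in> udg n D \<longleftrightarrow> a \<in> vset n \<and> b \<in> vset n \<and> a \<noteq> b \<and> (\<exists>t. (t, a) \<in> D\<^sup>* \<and> (t, b) \<in> D\<^sup>*)"
  unfolding udg_def is_dag_def by (simp add: trek_iff_common_ancestor)

lemma ancestor_in_vset: "is_dag n D \<Longrightarrow> (s, a) \<in> D\<^sup>* \<Longrightarrow> a \<in> vset n \<Longrightarrow> s \<in> vset n"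
  unfolding is_dag_def by (erule converse_rtranclE) auto

lemma dag_ancestor_without_parents:
  assumes "is_dag n D"
  obtains s where "(s, t) \<in> D\<^sup>*" "\<And>x. (x, s) \<notin> D"
proof -
  have "finite D"
    using assms unfolding is_dag_def vset_def by (meson finite_SigmaI finite_atLeastAtMost finite_subset)
  then have "wf D" using assms finite_acyclic_wf unfolding is_dag_def by blast
  then obtain s where "(s, t) \<in> D\<^sup>*" "\<And>x. (x, s) \<in> D \<Longrightarrow> (x, t) \<notin> D\<^sup>*"
    by (rule wfE_min[where Q = "{s. (s, t) \<in> D\<^sup>*}"]) auto
  then show ?thesis using that by (meson converse_rtrancl_into_rtrancl)
qed

definition closed_nbhd :: "('a \<times> 'a) set \<Rightarrow> 'a \<Rightarrow> 'a set" where
  "closed_nbhd U a = insert a (U `` {a})"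

lemma mem_closed_nbhd_iff [simp]: "x \<in> closed_nbhd U a \<longleftrightarrow> x = a \<or> (a, x) \<in> U"
  by (auto simp: closed_nbhd_def)

lemma closed_nbhd_sym: "sym U \<Longrightarrow> x \<in> closed_nbhd U y \<longleftrightarrow> y \<in> closed_nbhd U x"
  by (auto dest: symD)

lemma closed_nbhd_of_parentless_ancestor:
  assumes D: "is_dag n D" and sa: "(s, a) \<in> D\<^sup>*" and a: "a \<in> vset n"
    and no_parent: "\<And>x. (x, s) \<notin> D"
  shows "closed_nbhd (udg n D) s \<subseteq> closed_nbhd (udg n D) a"
proof
  fix y assume y: "y \<in> closed_nbhd (udg n D) s"
  have s: "s \<in> vset n" using ancestor_in_vset[OF D sa a] .
  have "(s, y) \<in> D\<^sup>* \<and> y \<in> vset n"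
  proof (cases "y = s")
    case False
    then obtain t where "(t, s) \<in> D\<^sup>*" "(t, y) \<in> D\<^sup>*" "y \<in> vset n"
      using y udg_iff_common_ancestor[OF D] by auto
    moreover from \<open>(t, s) \<in> D\<^sup>*\<close> have "t = s"
      using no_parent by (cases rule: rtranclE) auto
    ultimately show ?thesis by simp
  qed (simp add: s)
  then show "y \<in> closed_nbhd (udg n D) a"
    using sa a udg_iff_common_ancestor[OF D] by auto
qed

lemma UEC_rep_sym: "UEC_rep n U \<Longrightarrow> sym U"
  unfolding UEC_rep_def by (auto intro!: symI simp: udg_iff_common_ancestor)

lemma UEC_rep_irrefl: "UEC_rep n U \<Longrightarrow> irrefl U"
  unfolding UEC_rep_def irrefl_def by (auto simp: udg_iff_common_ancestor)

lemma UEC_rep_subset_vset: "UEC_rep n U \<Longrightarrow> U \<subseteq> vset n \<times> vset n"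
  unfolding UEC_rep_def by (auto simp: udg_iff_common_ancestor)

lemma UEC_rep_edge_dominated:
  assumes "UEC_rep n U" "(a, b) \<in> U"
  obtains s where "closed_nbhd U s \<subseteq> closed_nbhd U a \<inter> closed_nbhd U b"
proof -
  obtain D where D: "is_dag n D" "U = udg n D" using assms(1) unfolding UEC_rep_def by blast
  then obtain t where "(t, a) \<in> D\<^sup>*" "(t, b) \<in> D\<^sup>*" "a \<in> vset n" "b \<in> vset n"
    using assms(2) udg_iff_common_ancestor by blast
  moreover obtain s where "(s, t) \<in> D\<^sup>*" "\<And>x. (x, s) \<notin> D"
    using dag_ancestor_without_parents[OF D(1)] by blast
  ultimately show ?thesis
    using that closed_nbhd_of_parentless_ancestor[OF D(1)] D(2) by (meson Int_greatest rtrancl_trans)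
qed

lemma cpdag_marks_iff:
  assumes "sym U" "(a, b) \<in> U"
  shows "(a, b) \<in> cpdag_marks U \<longleftrightarrow> \<not> closed_nbhd U b \<subseteq> closed_nbhd U a"
proof
  assume "(a, b) \<in> cpdag_marks U"
  then obtain c where "(c, b) \<in> U" "c \<noteq> a" "(a, c) \<notin> U" by (auto simp: cpdag_marks_def)
  then have "c \<in> closed_nbhd U b" "c \<notin> closed_nbhd U a" using assms(1) by (auto dest: symD)
  then show "\<not> closed_nbhd U b \<subseteq> closed_nbhd U a" by blast
next
  assume "\<not> closed_nbhd U b \<subseteq> closed_nbhd U a"
  then obtain c where "c \<in> closed_nbhd U b" "c \<notin> closed_nbhd U a" by blast
  then have "(c, b) \<in> U" "c \<noteq> a" "(a, c) \<notin> U" using assms by (auto dest: symD)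
  then show "(a, b) \<in> cpdag_marks U" using assms(2) by (auto simp: cpdag_marks_def)
qed

lemma cpdag_undir_iff:
  "sym U \<Longrightarrow> (a, b) \<in> cpdag_undir U \<longleftrightarrow> (a, b) \<in> U \<and> closed_nbhd U a = closed_nbhd U b"
  unfolding cpdag_undir_def using cpdag_marks_iff[of U a b] cpdag_marks_iff[of U b a]
  by (auto dest: symD)

lemma cpdag_dir_iff:
  "sym U \<Longrightarrow> (a, b) \<in> cpdag_dir U \<longleftrightarrow> (a, b) \<in> U \<and> closed_nbhd U a \<subset> closed_nbhd U b"
  unfolding cpdag_dir_def using cpdag_marks_iff[of U a b] cpdag_marks_iff[of U b a]
  by (auto simp: cpdag_marks_def dest: symD)

lemma chain_comp_self: "v \<in> chain_comp U v"
  by (simp add: chain_comp_def)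

lemma chain_comp_eq_twins:
  assumes "sym U"
  shows "chain_comp U v = {w. closed_nbhd U w = closed_nbhd U v}"
proof (intro set_eqI iffI; simp)
  fix w assume "w \<in> chain_comp U v"
  then have "(v, w) \<in> (cpdag_undir U)\<^sup>*" by (simp add: chain_comp_def)
  then show "closed_nbhd U w = closed_nbhd U v"
    by induction (simp_all add: cpdag_undir_iff[OF assms])
next
  fix w assume twin: "closed_nbhd U w = closed_nbhd U v"
  show "w \<in> chain_comp U v"
  proof (cases "w = v")
    case False
    have "w \<in> closed_nbhd U v" using twin[symmetric] by simp
    with False twin have "(v, w) \<in> cpdag_undir U" by (simp add: cpdag_undir_iff[OF assms])
    then show ?thesis by (simp add: chain_comp_def)
  qed (simp add: chain_comp_def)
qed

lemma chain_comp_eq_iff: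
  "sym U \<Longrightarrow> chain_comp U v = chain_comp U w \<longleftrightarrow> closed_nbhd U v = closed_nbhd U w"
  by (auto simp: chain_comp_eq_twins)

lemma dag_reduction_reach_iff:
  assumes "sym U"
  shows "(X, chain_comp U v) \<in> (snd (dag_reduction n U))\<^sup>= \<longleftrightarrow>
    (\<exists>x. X = chain_comp U x \<and> v \<in> closed_nbhd U x \<and> closed_nbhd U x \<subseteq> closed_nbhd U v)"
proof
  assume "(X, chain_comp U v) \<in> (snd (dag_reduction n U))\<^sup>="
  then consider "X = chain_comp U v"
    | a b where "X = chain_comp U a" "chain_comp U v = chain_comp U b" "(a, b) \<in> U"
        "closed_nbhd U a \<subset> closed_nbhd U b"
    by (auto simp: dag_reduction_def cpdag_dir_iff[OF assms])
  then show "\<exists>x. X = chain_comp U x \<and> v \<in> closed_nbhd U x \<and> closed_nbhd U x \<subseteq> closed_nbhd U v"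
  proof cases
    case (2 a b)
    have "closed_nbhd U v = closed_nbhd U b" using 2(2) chain_comp_eq_iff[OF assms] by blast
    moreover have "a \<in> closed_nbhd U b" using 2(3) closed_nbhd_sym[OF assms] by auto
    ultimately show ?thesis
      using 2(1,4) closed_nbhd_sym[OF assms] by blast
  qed auto
next
  assume "\<exists>x. X = chain_comp U x \<and> v \<in> closed_nbhd U x \<and> closed_nbhd U x \<subseteq> closed_nbhd U v"
  then obtain x where x: "X = chain_comp U x" "v \<in> closed_nbhd U x"
    "closed_nbhd U x \<subseteq> closed_nbhd U v" by blast
  show "(X, chain_comp U v) \<in> (snd (dag_reduction n U))\<^sup>="
  proof (cases "closed_nbhd U x = closed_nbhd U v")
    case True
    then show ?thesis using x(1) chain_comp_eq_iff[OF assms] by simp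
  next
    case False
    then have "(x, v) \<in> cpdag_dir U"
      using x(2,3) by (auto simp: cpdag_dir_iff[OF assms])
    then show ?thesis using x(1) by (auto simp: dag_reduction_def)
  qed
qed

definition reduction_udg :: "nat set set \<times> (nat set \<times> nat set) set \<Rightarrow> (nat \<times> nat) set" where
  "reduction_udg R = {(v, w). v \<noteq> w \<and> (\<exists>C \<in> fst R. \<exists>C' \<in> fst R. \<exists>X.
     v \<in> C \<and> w \<in> C' \<and> (X, C) \<in> (snd R)\<^sup>= \<and> (X, C') \<in> (snd R)\<^sup>=)}"

lemma dag_reduction_component:
  "sym U \<Longrightarrow> v \<in> C \<Longrightarrow> C \<in> fst (dag_reduction n U) \<Longrightarrow> C = chain_comp U v"
  by (auto simp: dag_reduction_def chain_comp_eq_twins)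

lemma reduction_udg_dag_reduction:
  assumes sym: "sym U" and irrefl: "irrefl U" and vset: "U \<subseteq> vset n \<times> vset n"
    and dominated: "\<And>a b. (a, b) \<in> U \<Longrightarrow> \<exists>s. closed_nbhd U s \<subseteq> closed_nbhd U a \<inter> closed_nbhd U b"
  shows "reduction_udg (dag_reduction n U) = U"
proof (intro set_eqI iffI)
  fix e assume "e \<in> reduction_udg (dag_reduction n U)"
  then obtain v w C C' X where e: "e = (v, w)" "v \<noteq> w"
    and C: "v \<in> C" "C \<in> fst (dag_reduction n U)" "w \<in> C'" "C' \<in> fst (dag_reduction n U)"
    and reach: "(X, C) \<in> (snd (dag_reduction n U))\<^sup>=" "(X, C') \<in> (snd (dag_reduction n U))\<^sup>="
    unfolding reduction_udg_def by blast
  have "C = chain_comp U v" "C' = chain_comp U w"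
    using C dag_reduction_component[OF sym] by blast+
  then obtain x x' where "X = chain_comp U x" "closed_nbhd U x \<subseteq> closed_nbhd U v"
    and "X = chain_comp U x'" "w \<in> closed_nbhd U x'"
    using reach dag_reduction_reach_iff[OF sym] by metis
  then have "w \<in> closed_nbhd U v"
    using chain_comp_eq_iff[OF sym] by blast
  then show "e \<in> U" using e by simp
next
  fix e assume "e \<in> U"
  then obtain v w where e: "e = (v, w)" "(v, w) \<in> U" by (cases e) blast
  obtain s where s: "closed_nbhd U s \<subseteq> closed_nbhd U v \<inter> closed_nbhd U w"
    using dominated[OF e(2)] by blast
  have "v \<in> closed_nbhd U s" "w \<in> closed_nbhd U s"
    using s closed_nbhd_sym[OF sym] by auto
  then have "(chain_comp U s, chain_comp U u) \<in> (snd (dag_reduction n U))\<^sup>="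
    if "u \<in> {v, w}" for u
    using that s dag_reduction_reach_iff[OF sym] by blast
  moreover have "v \<noteq> w" using e(2) irrefl by (auto simp: irrefl_def)
  moreover have "chain_comp U v \<in> fst (dag_reduction n U)" "chain_comp U w \<in> fst (dag_reduction n U)"
    using e(2) vset by (auto simp: dag_reduction_def)
  ultimately show "e \<in> reduction_udg (dag_reduction n U)"
    unfolding reduction_udg_def e by (blast intro: chain_comp_self)
qed

theorem lemma5p6:
  fixes n :: nat
  shows "inj_on (dag_reduction n) {U. UEC_rep n U} \<and>
         bij_betw (dag_reduction n) {U. UEC_rep n U} (dag_reduction n ` {U. UEC_rep n U})"
proof -
  have "reduction_udg (dag_reduction n U) = U" if "UEC_rep n U" for U
  proof (rule reduction_udg_dag_reduction)
    show "sym U" "irrefl U" "U \<subseteq> vset n \<times> vset n"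
      using that by (rule UEC_rep_sym, rule UEC_rep_irrefl, rule UEC_rep_subset_vset)
    show "\<exists>s. closed_nbhd U s \<subseteq> closed_nbhd U a \<inter> closed_nbhd U b" if "(a, b) \<in> U" for a b
      using UEC_rep_edge_dominated[OF \<open>UEC_rep n U\<close> that] by blast
  qed
  then have "inj_on (dag_reduction n) {U. UEC_rep n U}"
    by (metis inj_onI mem_Collect_eq)
  then show ?thesis by (simp add: inj_on_imp_bij_betw)
qed

end
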